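(* Let $G$ be a graph with at most one isolated vertex and no connected component consisting of a single edge, and let $s=s(G)$ be its irregularity strength. Then $G$ contains a spanning subgraph $H$ with $m(H)\le 2s$. If moreover $G$ is regular, then $G$ contains a spanning subgraph $H$ with $m(H)\le 2s-2$.
   Context: All graphs are finite and simple. For a graph $G$ and integer $k\ge0$, $m(G,k)$ is the number of vertices of degree exactly $k$ in $G$ and $m(G)=\max_k m(G,k)$. For a graph $G=(V,E)$ with at most one isolated vertex and no isolated edges (components isomorphic to $K_2$), the irregularity strength $s(G)$ is the smallest positive integer $s$ such that there is a function $w:E\to\{1,2,\dots,s\}$ for which the sums $\sum_{e\ni v}w(e)$, $v\in V$, are pairwise distinct. *)

theory Defs
  imports Main
begin

definition simple_graph :: "'a set \<Rightarrow> 'a set set \<Rightarrow> bool" where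
  "simple_graph V E \<longleftrightarrow> finite V \<and>
     (\<forall>e\<in>E. \<exists>u v. u \<in> V \<and> v \<in> V \<and> u \<noteq> v \<and> e = {u, v})"

definition degree :: "'a set set \<Rightarrow> 'a \<Rightarrow> nat" where
  "degree E v = card {e \<in> E. v \<in> e}"

definition mult_deg :: "'a set \<Rightarrow> 'a set set \<Rightarrow> nat \<Rightarrow> nat" where
  "mult_deg V E k = card {v \<in> V. degree E v = k}"

definition max_mult :: "'a set \<Rightarrow> 'a set set \<Rightarrow> nat" where
  "max_mult V E = Max (range (mult_deg V E))"

definition isolated_vertex :: "'a set \<Rightarrow> 'a set set \<Rightarrow> 'a \<Rightarrow> bool" where
  "isolated_vertex V E v \<longleftrightarrow> v \<in> V \<and> degree E v = 0"

text \<open>An isolated edge: a component isomorphic to K2, i.e. an edge both of whose ends have degree 1.\<close>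
definition has_isolated_edge :: "'a set set \<Rightarrow> bool" where
  "has_isolated_edge E \<longleftrightarrow>
     (\<exists>u v. {u, v} \<in> E \<and> u \<noteq> v \<and> degree E u = 1 \<and> degree E v = 1)"

definition regular :: "'a set \<Rightarrow> 'a set set \<Rightarrow> bool" where
  "regular V E \<longleftrightarrow> (\<exists>d. \<forall>v\<in>V. degree E v = d)"

definition irregular_weighting :: "'a set \<Rightarrow> 'a set set \<Rightarrow> nat \<Rightarrow> ('a set \<Rightarrow> nat) \<Rightarrow> bool" where
  "irregular_weighting V E s w \<longleftrightarrow>
     (\<forall>e\<in>E. w e \<in> {1..s}) \<and> inj_on (\<lambda>v. \<Sum>e\<in>{e \<in> E. v \<in> e}. w e) V"

definition irreg_strength :: "'a set \<Rightarrow> 'a set set \<Rightarrow> nat" where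
  "irreg_strength V E = (LEAST s. 1 \<le> s \<and> (\<exists>w. irregular_weighting V E s w))"

end

theory Submission
  imports Defs Complex_Main "HOL-Library.Nat_Bijection"
begin

(* Let w be an irregular weighting with weights in {1..s} and weighted degrees sigma(v).
   Rounding the fractional subgraph with edge values w/s gives a spanning subgraph F in which
   every vertex has degree floor(sigma(v)/s) or floor(sigma(v)/s) + 1.  The vertices of
   F-degree k then have sigma(v) in [s(k-1), s(k+1)), and as the sigma(v) are distinct there are
   at most 2s of them.  In a d-regular graph the weights w - 1 lie in {0..s-1} and still have
   distinct weighted degrees sigma(v) - d, which gives the bound 2(s-1).

   The rounding lemma is proved by taking F with least total distance of its degrees from the
   target intervals.  From a vertex whose degree is too large one searches alternating walks
   that delete edges of F with value < 1 and insert edges outside F with value > 0.  If no such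
   walk ends where toggling it helps, the states reached by the search carry sums of
   deg_F - (fractional degree) which are >= 1 on one side and <= 0 on the other, yet a double
   count over the edges shows the first sum to be at most the second.  Vertices of too small
   degree are handled by passing to the complement E - F. *)

lemma simple_graph_edgeE:
  assumes "simple_graph V E" "e \<in> E"
  obtains u v where "u \<in> V" "v \<in> V" "u \<noteq> v" "e = {u, v}"
  using assms unfolding simple_graph_def by blast

lemma simple_graph_edges_doubletons:
  "simple_graph V E \<Longrightarrow> \<forall>e\<in>E. \<exists>a b. a \<noteq> b \<and> e = {a, b}"
  by (metis simple_graph_edgeE)

lemma simple_graph_finite_vertices: "simple_graph V E \<Longrightarrow> finite V"
  by (simp add: simple_graph_def)

lemma simple_graph_finite_edges:
  assumes "simple_graph V E"
  shows "finite E"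
proof -
  have "E \<subseteq> Pow V" using assms by (auto elim: simple_graph_edgeE)
  then show ?thesis
    using simple_graph_finite_vertices[OF assms] by (meson finite_Pow_iff finite_subset)
qed

definition toggle :: "'a set set \<Rightarrow> 'a set \<Rightarrow> 'a set set" where
  "toggle G e = (if e \<in> G then G - {e} else insert e G)"

lemma degree_toggle:
  assumes "finite G"
  shows "int (degree (toggle G e) x) =
     int (degree G x) + (if x \<in> e then (if e \<in> G then -1 else 1) else 0)"
proof -
  let ?N = "{e' \<in> G. x \<in> e'}"
  have fin: "finite ?N" using assms by simp
  show ?thesis
  proof (cases "e \<in> G \<and> x \<in> e")
    case True
    then have "{e' \<in> toggle G e. x \<in> e'} = ?N - {e}" and "e \<in> ?N"
      by (auto simp: toggle_def)
    moreover from fin \<open>e \<in> ?N\<close> have "card ?N > 0" by (auto simp: card_gt_0_iff)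
    ultimately show ?thesis
      using fin True by (simp add: degree_def card_Diff_singleton of_nat_diff)
  next
    case False
    then have "{e' \<in> toggle G e. x \<in> e'} = (if x \<in> e then insert e ?N else ?N)"
      and "e \<notin> ?N \<or> x \<notin> e"
      by (auto simp: toggle_def)
    then show ?thesis using fin False by (auto simp: degree_def)
  qed
qed

lemma degree_mono: "finite E \<Longrightarrow> F \<subseteq> E \<Longrightarrow> degree F x \<le> degree E x"
  unfolding degree_def by (rule card_mono) auto

lemma degree_Diff:
  assumes "finite E" "F \<subseteq> E"
  shows "int (degree (E - F) x) = int (degree E x) - int (degree F x)"
proof -
  have "{e \<in> E - F. x \<in> e} = {e \<in> E. x \<in> e} - {e \<in> F. x \<in> e}" by auto
  moreover have "{e \<in> F. x \<in> e} \<subseteq> {e \<in> E. x \<in> e}" using assms by auto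
  ultimately show ?thesis
    using assms degree_mono[OF assms]
    by (simp add: degree_def card_Diff_subset finite_subset of_nat_diff)
qed

lemma degree_eq_sum_indicator:
  assumes "finite E" "F \<subseteq> E"
  shows "real (degree F x) = (\<Sum>e\<in>{e\<in>E. x \<in> e}. if e \<in> F then 1 else 0)"
proof -
  have "{e\<in>E. x \<in> e} \<inter> {e. e \<in> F} = {e\<in>F. x\<in>e}" using assms by auto
  then show ?thesis using assms by (simp add: sum.If_cases degree_def)
qed

subsection \<open>Rounding a fractional subgraph\<close>

definition frac_degree :: "'a set set \<Rightarrow> ('a set \<Rightarrow> real) \<Rightarrow> 'a \<Rightarrow> real" where
  "frac_degree E y x = (\<Sum>e\<in>{e\<in>E. x \<in> e}. y e)"

lemma frac_degree_complement:
  "finite E \<Longrightarrow> frac_degree E (\<lambda>e. 1 - y e) x = real (degree E x) - frac_degree E y x"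
  by (simp add: frac_degree_def degree_def sum_subtractf)

definition defect :: "('a \<Rightarrow> int) \<Rightarrow> 'a \<Rightarrow> int \<Rightarrow> int" where
  "defect L x d = max 0 (L x - d) + max 0 (d - L x - 1)"

lemma defect_nonneg: "defect L x d \<ge> 0"
  by (simp add: defect_def)

lemma defect_eq_0_iff: "defect L x d = 0 \<longleftrightarrow> L x \<le> d \<and> d \<le> L x + 1"
  by (auto simp: defect_def max_def)

lemma defect_complement: "defect (\<lambda>z. D z - L z - 1) x (D x - d) = defect L x d"
  by (simp add: defect_def max_def)

lemma defect_decrease: "L x + 1 \<le> d \<Longrightarrow> defect L x (d - 1) \<le> defect L x d"
  by (simp add: defect_def max_def)

lemma defect_increase: "d \<le> L x \<Longrightarrow> defect L x (d + 1) \<le> defect L x d"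
  by (simp add: defect_def max_def)

lemma defect_excess_decrease:
  "L x + 2 \<le> d \<Longrightarrow> 1 \<le> k \<Longrightarrow> k \<le> 2 \<Longrightarrow> defect L x (d - k) < defect L x d"
  by (simp add: defect_def max_def)

definition improves_at :: "('a \<Rightarrow> int) \<Rightarrow> 'a \<Rightarrow> 'a set set \<Rightarrow> 'a set set \<Rightarrow> bool" where
  "improves_at L v G F \<longleftrightarrow>
     (\<forall>x. defect L x (int (degree G x)) \<le> defect L x (int (degree F x)))
     \<and> defect L v (int (degree G v)) < defect L v (int (degree F v))"

locale excess_setting =
  fixes E F :: "'a set set" and y :: "'a set \<Rightarrow> real" and L :: "'a \<Rightarrow> int" and v0 :: 'a
  assumes finite_E: "finite E"
    and edges: "\<forall>e\<in>E. \<exists>a b. a \<noteq> b \<and> e = {a, b}"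
    and F_subset: "F \<subseteq> E"
    and y_range: "\<forall>e\<in>E. 0 \<le> y e \<and> y e \<le> 1"
    and L_bounds: "\<forall>x. real_of_int (L x) \<le> frac_degree E y x \<and> frac_degree E y x \<le> real_of_int (L x) + 1"
    and excess: "L v0 + 2 \<le> int (degree F v0)"
begin

text \<open>A state \<open>(x, p)\<close> is the end \<open>x\<close> of an alternating walk from \<open>v0\<close>; the next edge is
  inserted into the subgraph if \<open>p\<close> and deleted from it otherwise.  \<open>alt_path t G S\<close> says
  that \<open>G\<close> arises from \<open>F\<close> by toggling such a walk, without repeated vertices, with vertex
  set \<open>S\<close> and end state \<open>t\<close>; toggling changes the degrees by \<open>shift\<close>.  A state is terminal
  when this decreases the defect of \<open>v0\<close> without increasing any other.\<close>

definition terminal :: "'a \<times> bool \<Rightarrow> bool" where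
  "terminal t = (if snd t then fst t = v0 \<or> L (fst t) + 1 \<le> int (degree F (fst t))
            else fst t \<noteq> v0 \<and> int (degree F (fst t)) \<le> L (fst t))"

definition alt_step :: "'a \<times> bool \<Rightarrow> 'a \<times> bool \<Rightarrow> 'a set \<Rightarrow> bool" where
  "alt_step s t e = (e \<in> E \<and> e = {fst s, fst t} \<and> fst s \<noteq> fst t \<and> snd t = (\<not> snd s) \<and>
      (if snd s then e \<notin> F \<and> 0 < y e else e \<in> F \<and> y e < 1))"

definition shift :: "'a \<Rightarrow> bool \<Rightarrow> 'a \<Rightarrow> int" where
  "shift u p x = (if x = v0 then -1 else 0) + (if x = u then (if p then -1 else 1) else 0)"

inductive alt_path :: "'a \<times> bool \<Rightarrow> 'a set set \<Rightarrow> 'a set \<Rightarrow> bool" where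
  init: "alt_path (v0, False) F {v0}"
| step: "alt_path s G S \<Longrightarrow> \<not> terminal s \<Longrightarrow> alt_step s t e \<Longrightarrow> fst t \<notin> S
    \<Longrightarrow> alt_path t (toggle G e) (insert (fst t) S)"

definition path_inv :: "'a \<times> bool \<Rightarrow> 'a set set \<Rightarrow> 'a set \<Rightarrow> bool" where
  "path_inv s G S \<longleftrightarrow> G \<subseteq> E
     \<and> (\<forall>x. int (degree G x) = int (degree F x) + shift (fst s) (snd s) x)
     \<and> (\<forall>e\<in>E. (e \<in> G) \<noteq> (e \<in> F) \<longrightarrow> e \<subseteq> S)
     \<and> (\<forall>e\<in>E. (e \<in> G) \<noteq> (e \<in> F) \<and> fst s \<in> e \<longrightarrow> (e \<in> F) = snd s)
     \<and> fst s \<in> S"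

definition reachable :: "('a \<times> bool) set" where
  "reachable = {t. \<exists>G S. alt_path t G S}"

lemma terminal_True_or_False: "terminal (x, True) \<or> terminal (x, False)"
  by (auto simp: terminal_def)

lemma shift_step:
  "u \<noteq> w \<Longrightarrow> shift w (\<not> p) x = shift u p x + (if x = u \<or> x = w then (if p then 1 else -1) else 0)"
  by (auto simp: shift_def)

lemma improves_at_if_terminal:
  assumes shifted: "\<forall>x. int (degree G x) = int (degree F x) + shift z q x"
    and is_terminal: "terminal (z, q)"
  shows "improves_at L v0 G F"
proof -
  have dG: "int (degree G x) = int (degree F x) + shift z q x" for x
    using shifted by blast
  have v0: "defect L v0 (int (degree G v0)) < defect L v0 (int (degree F v0))"
  proof (cases "z = v0")
    case True
    with is_terminal have "int (degree G v0) = int (degree F v0) - 2"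
      using dG[of v0] by (auto simp: terminal_def shift_def split: if_splits)
    then show ?thesis using excess defect_excess_decrease[of L v0 "int (degree F v0)" 2] by simp
  next
    case False
    then have "int (degree G v0) = int (degree F v0) - 1"
      using dG[of v0] by (simp add: shift_def)
    then show ?thesis using excess defect_excess_decrease[of L v0 "int (degree F v0)" 1] by simp
  qed
  have "defect L x (int (degree G x)) \<le> defect L x (int (degree F x))" for x
  proof (cases "x = v0 \<or> x \<noteq> z")
    case True
    then show ?thesis using v0 dG[of x] by (auto simp: shift_def)
  next
    case False
    then have x: "x \<noteq> v0" "x = z" by auto
    show ?thesis
    proof (cases q)
      case True
      then show ?thesis using is_terminal dG[of x] x defect_decrease[of L x "int (degree F x)"]
        by (simp add: terminal_def shift_def)
    next
      case False
      then show ?thesis using is_terminal dG[of x] x defect_increase[of "int (degree F x)" L x]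
        by (simp add: terminal_def shift_def)
    qed
  qed
  with v0 show ?thesis by (simp add: improves_at_def)
qed

lemma alt_step_toggle:
  assumes "path_inv s G S" "alt_step s t e"
  shows "toggle G e \<subseteq> E"
    and "\<forall>x. int (degree (toggle G e) x) = int (degree F x) + shift (fst t) (snd t) x"
    and "(e \<in> G) = (e \<in> F)"
proof -
  obtain u p w q where s: "s = (u, p)" and t: "t = (w, q)" by (cases s, cases t)
  from assms(1) have GE: "G \<subseteq> E"
    and dG: "\<forall>x. int (degree G x) = int (degree F x) + shift u p x"
    and changed_at_u: "\<forall>e\<in>E. (e \<in> G) \<noteq> (e \<in> F) \<and> u \<in> e \<longrightarrow> (e \<in> F) = p"
    by (auto simp: path_inv_def s)
  from assms(2) have eE: "e \<in> E" and e: "e = {u, w}" and uw: "u \<noteq> w" and q: "q = (\<not> p)"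
    and kind: "if p then e \<notin> F \<and> 0 < y e else e \<in> F \<and> y e < 1"
    by (auto simp: alt_step_def s t)
  show eG: "(e \<in> G) = (e \<in> F)"
  proof (rule ccontr)
    assume "(e \<in> G) \<noteq> (e \<in> F)"
    with changed_at_u eE e have "(e \<in> F) = p" by auto
    with kind show False by (auto split: if_splits)
  qed
  show "toggle G e \<subseteq> E" using GE eE by (auto simp: toggle_def)
  show "\<forall>x. int (degree (toggle G e) x) = int (degree F x) + shift (fst t) (snd t) x"
  proof
    fix x
    have "int (degree (toggle G e) x) =
        int (degree G x) + (if x \<in> e then (if e \<in> G then -1 else 1) else 0)"
      using GE finite_E by (intro degree_toggle) (rule finite_subset)
    also have "\<dots> = int (degree G x) + (if x = u \<or> x = w then (if p then 1 else -1) else 0)"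
      using e eG kind by (auto split: if_splits)
    also have "\<dots> = int (degree F x) + shift w q x"
      using dG[rule_format, of x] shift_step[OF uw, of p x] q by simp
    finally show "int (degree (toggle G e) x) = int (degree F x) + shift (fst t) (snd t) x"
      using t by simp
  qed
qed

lemma alt_path_invariant: "alt_path s G S \<Longrightarrow> path_inv s G S"
proof (induction rule: alt_path.induct)
  case init
  show ?case using F_subset by (auto simp: path_inv_def shift_def)
next
  case (step s G S t e)
  obtain u p w q where s: "s = (u, p)" and t: "t = (w, q)" by (cases s, cases t)
  note toggled = alt_step_toggle[OF step.IH step.hyps(3)]
  from step.IH have changed_in_S: "\<forall>e\<in>E. (e \<in> G) \<noteq> (e \<in> F) \<longrightarrow> e \<subseteq> S" and "u \<in> S"
    by (auto simp: path_inv_def s)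
  from step.hyps(3) have e: "e = {u, w}" and q: "q = (\<not> p)"
    and kind: "if p then e \<notin> F \<and> 0 < y e else e \<in> F \<and> y e < 1"
    by (auto simp: alt_step_def s t)
  have "w \<notin> S" using step.hyps(4) t by simp
  have changed: "(e' \<in> toggle G e) \<noteq> (e' \<in> F) \<longleftrightarrow> e' = e \<or> (e' \<in> G) \<noteq> (e' \<in> F)" for e'
    using toggled(3) by (cases "e \<in> G") (auto simp: toggle_def)
  have "e' \<subseteq> insert w S" if "e' \<in> E" "(e' \<in> toggle G e) \<noteq> (e' \<in> F)" for e'
  proof (cases "e' = e")
    case True
    then show ?thesis using e \<open>u \<in> S\<close> by auto
  next
    case False
    then have "e' \<subseteq> S" using that changed[of e'] changed_in_S by simp
    then show ?thesis by auto
  qed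
  moreover have "(e' \<in> F) = q"
    if "e' \<in> E" "(e' \<in> toggle G e) \<noteq> (e' \<in> F)" "w \<in> e'" for e'
  proof -
    have "e' = e"
    proof (rule ccontr)
      assume "e' \<noteq> e"
      then have "e' \<subseteq> S" using that(1,2) changed[of e'] changed_in_S by simp
      then show False using that(3) \<open>w \<notin> S\<close> by auto
    qed
    then show ?thesis using kind q by (cases p) auto
  qed
  ultimately show ?case
    using toggled(1,2) unfolding path_inv_def t fst_conv snd_conv by simp
qed

lemma reachable_start: "(v0, False) \<in> reachable"
  by (auto simp: reachable_def intro: alt_path.init)

lemma alt_path_visited_reachable: "alt_path t G S \<Longrightarrow> x \<in> S \<Longrightarrow> \<exists>q. (x, q) \<in> reachable"
proof (induction arbitrary: x rule: alt_path.induct)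
  case init
  then show ?case using reachable_start by auto
next
  case (step s G S t e)
  have "t \<in> reachable" using alt_path.step[OF step.hyps] by (auto simp: reachable_def)
  then show ?case using step by (cases t) auto
qed

definition surplus :: "'a \<Rightarrow> real" where
  "surplus x = real (degree F x) - frac_degree E y x"

definition edge_surplus :: "'a set \<Rightarrow> real" where
  "edge_surplus e = (if e \<in> F then 1 else 0) - y e"

lemma surplus_eq_sum: "surplus x = (\<Sum>e\<in>E. if x \<in> e then edge_surplus e else 0)"
proof -
  have "(\<Sum>e\<in>E. if x \<in> e then edge_surplus e else 0) = (\<Sum>e\<in>{e\<in>E. x \<in> e}. edge_surplus e)"
    using finite_E by (simp add: sum.inter_filter)
  also have "\<dots> = surplus x"
    using degree_eq_sum_indicator[OF finite_E F_subset, of x]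
    by (simp add: edge_surplus_def surplus_def frac_degree_def sum_subtractf)
  finally show ?thesis by simp
qed

lemma sum_surplus_eq:
  assumes "finite A"
  shows "(\<Sum>x\<in>A. surplus x) = (\<Sum>e\<in>E. edge_surplus e * real (card {x\<in>A. x \<in> e}))"
proof -
  have "(\<Sum>x\<in>A. surplus x) = (\<Sum>e\<in>E. \<Sum>x\<in>A. if x \<in> e then edge_surplus e else 0)"
    unfolding surplus_eq_sum by (rule sum.swap)
  also have "\<dots> = (\<Sum>e\<in>E. edge_surplus e * real (card {x\<in>A. x \<in> e}))"
    using assms by (simp add: sum.If_cases Int_def conj_commute mult.commute)
  finally show ?thesis .
qed

end

locale excess_stuck = excess_setting +
  assumes no_improvement: "\<not> (\<exists>G\<subseteq>E. improves_at L v0 G F)"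
begin

lemma reachable_nonterminal:
  assumes "t \<in> reachable"
  shows "\<not> terminal t"
proof
  assume "terminal t"
  obtain z q where t: "t = (z, q)" by (cases t)
  from assms obtain G S where "alt_path t G S" by (auto simp: reachable_def)
  then have "path_inv t G S" by (rule alt_path_invariant)
  then have "G \<subseteq> E" "\<forall>x. int (degree G x) = int (degree F x) + shift z q x"
    by (auto simp: path_inv_def t)
  then show False
    using improves_at_if_terminal \<open>terminal t\<close> t no_improvement by blast
qed

lemma reachable_closed:
  assumes "s \<in> reachable" "alt_step s t e"
  shows "t \<in> reachable"
proof -
  obtain w q where t: "t = (w, q)" by (cases t)
  from assms(1) obtain G S where path: "alt_path s G S" by (auto simp: reachable_def)
  note toggled = alt_step_toggle[OF alt_path_invariant[OF path] assms(2)]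
  have "\<not> terminal t"
    using improves_at_if_terminal[OF toggled(2)[unfolded t fst_conv snd_conv]] toggled(1)
      no_improvement t by auto
  show ?thesis
  proof (cases "w \<in> S")
    case False
    then show ?thesis
      using alt_path.step[OF path reachable_nonterminal[OF assms(1)] assms(2)] t
      by (auto simp: reachable_def)
  next
    case True
    \<comment> \<open>the walk cannot be extended, but \<open>w\<close> is reached with some parity \<open>q'\<close>; if
      \<open>q' \<noteq> q\<close>, then \<open>w\<close> would be non-terminal with both parities\<close>
    with alt_path_visited_reachable[OF path] obtain q' where "(w, q') \<in> reachable" by auto
    then show ?thesis
      using reachable_nonterminal \<open>\<not> terminal t\<close> t terminal_True_or_False[of w]
      by (cases q; cases q') auto
  qed
qed

definition reached :: "bool \<Rightarrow> 'a set" where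
  "reached q = {x \<in> \<Union>E. (x, q) \<in> reachable}"

lemma finite_reached: "finite (reached q)"
proof -
  have "\<forall>e\<in>E. finite e" using edges by fastforce
  then show ?thesis using finite_E by (simp add: reached_def)
qed

lemma sum_surplus_reached_False: "1 \<le> (\<Sum>x\<in>reached False. surplus x)"
proof -
  have "frac_degree E y v0 \<ge> 0"
    using y_range by (auto simp: frac_degree_def intro: sum_nonneg)
  then have "degree F v0 > 0" using excess L_bounds[rule_format, of v0] by linarith
  then obtain e where "e \<in> F" "v0 \<in> e"
    by (metis (mono_tags, lifting) card.empty empty_Collect_eq degree_def less_irrefl)
  then have v0: "v0 \<in> reached False"
    using F_subset reachable_start by (auto simp: reached_def)
  have "surplus x \<ge> 0" if "x \<in> reached False - {v0}" for x
  proof -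
    have "L x + 1 \<le> int (degree F x)"
      using reachable_nonterminal[of "(x, False)"] that by (auto simp: reached_def terminal_def)
    then show ?thesis using L_bounds[rule_format, of x] unfolding surplus_def by linarith
  qed
  then have "(\<Sum>x\<in>reached False - {v0}. surplus x) \<ge> 0" by (rule sum_nonneg)
  moreover have "surplus v0 \<ge> 1"
    using excess L_bounds[rule_format, of v0] unfolding surplus_def by linarith
  ultimately show ?thesis
    using finite_reached v0 by (simp add: sum.remove)
qed

lemma sum_surplus_reached_True: "(\<Sum>x\<in>reached True. surplus x) \<le> 0"
proof (rule sum_nonpos)
  fix x assume "x \<in> reached True"
  then have "int (degree F x) \<le> L x"
    using reachable_nonterminal[of "(x, True)"] by (auto simp: reached_def terminal_def)
  then show "surplus x \<le> 0" using L_bounds[rule_format, of x] unfolding surplus_def by linarith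
qed

lemma edge_surplus_reached_le:
  assumes "e \<in> E"
  shows "edge_surplus e * real (card {x\<in>reached False. x \<in> e})
    \<le> edge_surplus e * real (card {x\<in>reached True. x \<in> e})"
proof -
  obtain a b where ab: "a \<noteq> b" "e = {a, b}" using edges assms by blast
  have count: "real (card {x\<in>A. x \<in> e}) = (if a \<in> A then 1 else 0) + (if b \<in> A then 1 else 0)"
    for A
  proof -
    have "{x\<in>A. x \<in> e} = (if a \<in> A then {a} else {}) \<union> (if b \<in> A then {b} else {})"
      using ab by auto
    then show ?thesis using ab by (auto simp: card_insert_if)
  qed
  have disjoint: "x \<notin> reached False \<or> x \<notin> reached True" for x
    using reachable_nonterminal[of "(x, False)"] reachable_nonterminal[of "(x, True)"]
      terminal_True_or_False[of x] by (auto simp: reached_def)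
  have "a \<in> \<Union>E" "b \<in> \<Union>E" using assms ab by auto
  then have cross: "x \<in> reached p \<Longrightarrow> alt_step (x, p) (x', \<not> p) e \<Longrightarrow> x' \<in> reached (\<not> p)"
    if "{x, x'} = {a, b}" for x x' p
    using reachable_closed that by (auto simp: reached_def doubleton_eq_iff)
  consider "edge_surplus e > 0" | "edge_surplus e < 0" | "edge_surplus e = 0" by linarith
  then show ?thesis
  proof cases
    case 1
    then have "alt_step (a, False) (b, True) e" "alt_step (b, False) (a, True) e"
      using y_range assms ab by (auto simp: edge_surplus_def alt_step_def split: if_splits)
    then have "real (card {x\<in>reached False. x \<in> e}) \<le> real (card {x\<in>reached True. x \<in> e})"
      unfolding count using cross[of a b False] cross[of b a False] disjoint[of a] disjoint[of b]
      by (auto simp: insert_commute)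
    then show ?thesis using 1 by (simp add: mult_left_mono)
  next
    case 2
    then have "alt_step (a, True) (b, False) e" "alt_step (b, True) (a, False) e"
      using y_range assms ab by (auto simp: edge_surplus_def alt_step_def split: if_splits)
    then have "real (card {x\<in>reached True. x \<in> e}) \<le> real (card {x\<in>reached False. x \<in> e})"
      unfolding count using cross[of a b True] cross[of b a True] disjoint[of a] disjoint[of b]
      by (auto simp: insert_commute)
    then show ?thesis using 2 by (simp add: mult_left_mono_neg)
  qed simp
qed

lemma stuck_absurd: False
proof -
  have "(\<Sum>x\<in>reached False. surplus x)
      = (\<Sum>e\<in>E. edge_surplus e * real (card {x\<in>reached False. x \<in> e}))"
    by (rule sum_surplus_eq[OF finite_reached])
  also have "\<dots> \<le> (\<Sum>e\<in>E. edge_surplus e * real (card {x\<in>reached True. x \<in> e}))"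
    using edge_surplus_reached_le by (rule sum_mono)
  also have "\<dots> = (\<Sum>x\<in>reached True. surplus x)"
    by (rule sum_surplus_eq[OF finite_reached, symmetric])
  finally show False
    using sum_surplus_reached_False sum_surplus_reached_True by linarith
qed

end

lemma (in excess_setting) exists_improvement: "\<exists>G\<subseteq>E. improves_at L v0 G F"
proof (rule ccontr)
  assume "\<not> ?thesis"
  then interpret excess_stuck E F y L v0 by unfold_locales
  show False by (rule stuck_absurd)
qed

lemma defect_complement_subgraph:
  assumes "finite E" "H \<subseteq> E"
  shows "defect (\<lambda>z. int (degree E z) - L z - 1) x (int (degree H x))
    = defect L x (int (degree (E - H) x))"
proof -
  have "int (degree H x) = int (degree E x) - int (degree (E - H) x)"
    using degree_Diff[OF assms] by simp
  then show ?thesis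
    using defect_complement[of "\<lambda>z. int (degree E z)" L x "int (degree (E - H) x)"] by simp
qed

text \<open>A vertex of too small degree in \<open>F\<close> has too large degree in \<open>E - F\<close> with respect to
  the complementary values \<open>1 - y\<close> and bounds \<open>deg\<^sub>E - L - 1\<close>.\<close>

lemma exists_improvement_if_defect:
  assumes finite_E: "finite E"
    and edges: "\<forall>e\<in>E. \<exists>a b. a \<noteq> b \<and> e = {a, b}"
    and F_subset: "F \<subseteq> E"
    and y_range: "\<forall>e\<in>E. 0 \<le> y e \<and> y e \<le> 1"
    and L_bounds: "\<forall>x. real_of_int (L x) \<le> frac_degree E y x \<and> frac_degree E y x \<le> real_of_int (L x) + 1"
    and "defect L v (int (degree F v)) > 0"
  shows "\<exists>G\<subseteq>E. improves_at L v G F"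
proof (cases "L v + 2 \<le> int (degree F v)")
  case True
  interpret excess_setting E F y L v using assms True by unfold_locales
  show ?thesis by (rule exists_improvement)
next
  case False
  with \<open>defect L v (int (degree F v)) > 0\<close> have deficit: "int (degree F v) + 1 \<le> L v"
    by (simp add: defect_def max_def split: if_splits)
  define L' where "L' = (\<lambda>z. int (degree E z) - L z - 1)"
  have "excess_setting E (E - F) (\<lambda>e. 1 - y e) L' v"
  proof
    show "\<forall>x. real_of_int (L' x) \<le> frac_degree E (\<lambda>e. 1 - y e) x
        \<and> frac_degree E (\<lambda>e. 1 - y e) x \<le> real_of_int (L' x) + 1"
      using L_bounds frac_degree_complement[OF finite_E] by (simp add: L'_def) (smt (verit))
    show "L' v + 2 \<le> int (degree (E - F) v)"
      using deficit degree_Diff[OF finite_E F_subset, of v] by (simp add: L'_def)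
  qed (use assms in auto)
  then obtain G where "G \<subseteq> E" and G: "improves_at L' v G (E - F)"
    by (rule excess_setting.exists_improvement[THEN exE]) blast
  have "E - (E - F) = F" using F_subset by auto
  then have "improves_at L v (E - G) F"
    using G[unfolded L'_def] defect_complement_subgraph[OF finite_E \<open>G \<subseteq> E\<close>]
      defect_complement_subgraph[OF finite_E Diff_subset[of E F]]
    by (simp add: improves_at_def)
  then show ?thesis by blast
qed

theorem degree_rounding:
  assumes finite_E: "finite E"
    and edges: "\<forall>e\<in>E. \<exists>a b. a \<noteq> b \<and> e = {a, b}"
    and y_range: "\<forall>e\<in>E. 0 \<le> y e \<and> y e \<le> 1"
    and L_bounds: "\<forall>x. real_of_int (L x) \<le> frac_degree E y x \<and> frac_degree E y x \<le> real_of_int (L x) + 1"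
  shows "\<exists>F\<subseteq>E. \<forall>x. L x \<le> int (degree F x) \<and> int (degree F x) \<le> L x + 1"
proof -
  have "\<forall>e\<in>E. finite e" using edges by fastforce
  then have finite_VE: "finite (\<Union>E)" using finite_E by blast
  define total where "total F = nat (\<Sum>x\<in>\<Union>E. defect L x (int (degree F x)))" for F
  obtain F where F_subset: "F \<subseteq> E" and minimal: "\<And>G. G \<subseteq> E \<Longrightarrow> total F \<le> total G"
    using ex_has_least_nat[of "\<lambda>F. F \<subseteq> E" "{}" total] by blast
  have "defect L x (int (degree F x)) = 0" for x
  proof (rule ccontr)
    assume "defect L x (int (degree F x)) \<noteq> 0"
    then have pos: "defect L x (int (degree F x)) > 0" using defect_nonneg[of L x "int (degree F x)"] by linarith
    have "x \<in> \<Union>E"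
    proof (rule ccontr)
      assume "x \<notin> \<Union>E"
      then have "{e\<in>E. x \<in> e} = {}" "{e\<in>F. x \<in> e} = {}" using F_subset by auto
      then have "frac_degree E y x = 0" "degree F x = 0"
        unfolding frac_degree_def degree_def by (metis sum.empty, metis card.empty)
      then show False using pos L_bounds[rule_format, of x] by (simp add: defect_def)
    qed
    obtain G where "G \<subseteq> E" and "improves_at L x G F"
      using exists_improvement_if_defect[OF finite_E edges F_subset y_range L_bounds pos] by blast
    then have "(\<Sum>z\<in>\<Union>E. defect L z (int (degree G z))) < (\<Sum>z\<in>\<Union>E. defect L z (int (degree F z)))"
      using \<open>x \<in> \<Union>E\<close> by (intro sum_strict_mono_ex1[OF finite_VE]) (auto simp: improves_at_def)
    moreover have "0 \<le> (\<Sum>z\<in>\<Union>E. defect L z (int (degree G z)))"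
      by (simp add: sum_nonneg defect_nonneg)
    ultimately have "total G < total F"
      unfolding total_def by linarith
    with minimal[OF \<open>G \<subseteq> E\<close>] show False by simp
  qed
  with F_subset show ?thesis by (auto simp: defect_eq_0_iff)
qed

subsection \<open>Subgraphs from weightings\<close>

definition weighted_degree :: "'a set set \<Rightarrow> ('a set \<Rightarrow> nat) \<Rightarrow> 'a \<Rightarrow> nat" where
  "weighted_degree E w v = (\<Sum>e\<in>{e \<in> E. v \<in> e}. w e)"

lemma weighted_degree_diff_one:
  assumes "finite E" "\<forall>e\<in>E. 1 \<le> w e"
  shows "weighted_degree E (\<lambda>e. w e - 1) v + degree E v = weighted_degree E w v"
proof -
  have "weighted_degree E w v = (\<Sum>e\<in>{e\<in>E. v \<in> e}. (w e - 1) + 1)"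
    unfolding weighted_degree_def using assms(2) by (intro sum.cong) auto
  also have "\<dots> = weighted_degree E (\<lambda>e. w e - 1) v + degree E v"
    unfolding weighted_degree_def degree_def sum.distrib by simp
  finally show ?thesis by simp
qed

lemma inj_on_weighted_degree_diff_one:
  assumes "finite E" "\<forall>e\<in>E. 1 \<le> w e" "\<forall>v\<in>V. degree E v = d"
    and "inj_on (weighted_degree E w) V"
  shows "inj_on (weighted_degree E (\<lambda>e. w e - 1)) V"
proof (rule inj_onI)
  fix u v
  assume "u \<in> V" "v \<in> V" "weighted_degree E (\<lambda>e. w e - 1) u = weighted_degree E (\<lambda>e. w e - 1) v"
  moreover have "degree E u = degree E v" using \<open>u \<in> V\<close> \<open>v \<in> V\<close> assms(3) by simp
  ultimately have "weighted_degree E w u = weighted_degree E w v"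
    using weighted_degree_diff_one[OF assms(1,2), of u] weighted_degree_diff_one[OF assms(1,2), of v]
    by simp
  then show "u = v" using inj_onD[OF assms(4)] \<open>u \<in> V\<close> \<open>v \<in> V\<close> by blast
qed

lemma subgraph_degree_quotient:
  assumes finite_E: "finite E" and edges: "\<forall>e\<in>E. \<exists>a b. a \<noteq> b \<and> e = {a, b}"
    and "T > 0" and "\<forall>e\<in>E. w e \<le> T"
  shows "\<exists>F\<subseteq>E. \<forall>v. weighted_degree E w v div T \<le> degree F v
    \<and> degree F v \<le> weighted_degree E w v div T + 1"
proof -
  define y where "y e = real (w e) / real T" for e
  define L where "L x = int (weighted_degree E w x div T)" for x
  have frac: "frac_degree E y x = real (weighted_degree E w x) / real T" for x
    by (simp add: frac_degree_def weighted_degree_def y_def sum_divide_distrib)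
  have L_bounds: "\<forall>x. real_of_int (L x) \<le> frac_degree E y x \<and> frac_degree E y x \<le> real_of_int (L x) + 1"
  proof
    fix x
    have "L x = \<lfloor>frac_degree E y x\<rfloor>"
      unfolding L_def frac by (simp add: floor_divide_of_nat_eq)
    then show "real_of_int (L x) \<le> frac_degree E y x \<and> frac_degree E y x \<le> real_of_int (L x) + 1"
      using of_int_floor_le[of "frac_degree E y x"] real_of_int_floor_add_one_gt[of "frac_degree E y x"]
      by linarith
  qed
  have "\<forall>e\<in>E. 0 \<le> y e \<and> y e \<le> 1" using assms(3,4) by (auto simp: y_def divide_le_eq_1)
  from degree_rounding[OF finite_E edges this L_bounds]
  obtain F where "F \<subseteq> E" and F: "\<forall>x. L x \<le> int (degree F x) \<and> int (degree F x) \<le> L x + 1"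
    by blast
  have "weighted_degree E w v div T \<le> degree F v \<and> degree F v \<le> weighted_degree E w v div T + 1"
    for v using F[rule_format, of v] unfolding L_def by linarith
  with \<open>F \<subseteq> E\<close> show ?thesis by blast
qed

lemma card_level_set_le:
  fixes f g :: "'a \<Rightarrow> nat"
  assumes "inj_on f V" "T > 0"
    and "\<forall>v\<in>V. f v div T \<le> g v \<and> g v \<le> f v div T + 1"
  shows "card {v\<in>V. g v = k} \<le> 2 * T"
proof -
  have "f ` {v\<in>V. g v = k} \<subseteq> {T * (k - 1) ..< T * (k + 1)}"
  proof
    fix n assume "n \<in> f ` {v\<in>V. g v = k}"
    then obtain v where v: "v \<in> V" "g v = k" "n = f v" by auto
    with assms(3) have "f v div T < k + 1" "k - 1 \<le> f v div T" by auto
    then have "f v < T * (k + 1)" "T * (k - 1) \<le> f v"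
      using assms(2) by (simp_all add: div_less_iff_less_mult less_eq_div_iff_mult_less_eq mult.commute)
    then show "n \<in> {T * (k - 1) ..< T * (k + 1)}" using v by auto
  qed
  then have "card (f ` {v\<in>V. g v = k}) \<le> card {T * (k - 1) ..< T * (k + 1)}"
    by (rule card_mono[OF finite_atLeastLessThan])
  also have "\<dots> = T * (k + 1) - T * (k - 1)" by simp
  also have "\<dots> \<le> 2 * T" by (cases k) (auto simp: algebra_simps)
  finally show ?thesis
    using assms(1) by (simp add: card_image inj_on_subset)
qed

lemma max_mult_le:
  assumes "finite V" "\<forall>k. mult_deg V F k \<le> B"
  shows "max_mult V F \<le> B"
proof -
  have "range (mult_deg V F) \<subseteq> {..card V}"
    unfolding mult_deg_def using assms(1) by (auto intro: card_mono)
  then have "finite (range (mult_deg V F))" using finite_subset by blast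
  then show ?thesis unfolding max_mult_def using assms(2) by auto
qed

lemma max_mult_le_if_inj_weighted_degree:
  assumes "simple_graph V E" "T > 0" "\<forall>e\<in>E. w e \<le> T"
    and "inj_on (weighted_degree E w) V"
  shows "\<exists>F\<subseteq>E. max_mult V F \<le> 2 * T"
proof -
  from subgraph_degree_quotient[OF simple_graph_finite_edges[OF assms(1)]
      simple_graph_edges_doubletons[OF assms(1)] assms(2,3)]
  obtain F where "F \<subseteq> E" and F: "\<forall>v. weighted_degree E w v div T \<le> degree F v
      \<and> degree F v \<le> weighted_degree E w v div T + 1"
    by blast
  have "mult_deg V F k \<le> 2 * T" for k
    unfolding mult_deg_def using F by (intro card_level_set_le[OF assms(4,2)]) simp
  then have "max_mult V F \<le> 2 * T"
    using max_mult_le[OF simple_graph_finite_vertices[OF assms(1)]] by blast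
  with \<open>F \<subseteq> E\<close> show ?thesis by blast
qed

subsection \<open>Irregular weightings\<close>

lemma irregular_weighting_iff:
  "irregular_weighting V E s w \<longleftrightarrow> (\<forall>e\<in>E. w e \<in> {1..s}) \<and> inj_on (weighted_degree E w) V"
  unfolding irregular_weighting_def weighted_degree_def[abs_def] by simp

lemma common_incidences_eq:
  assumes "simple_graph V E"
    and "card {v. isolated_vertex V E v} \<le> 1"
    and "\<not> has_isolated_edge E"
    and "u \<in> V" "v \<in> V" "{e \<in> E. u \<in> e} = {e \<in> E. v \<in> e}"
  shows "u = v"
proof (rule ccontr)
  assume "u \<noteq> v"
  show False
  proof (cases "{e \<in> E. u \<in> e} = {}")
    case True
    then have "degree E u = 0" "degree E v = 0"
      unfolding degree_def using assms(6) by (metis card.empty)+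
    then have "{u, v} \<subseteq> {x. isolated_vertex V E x}"
      using assms(4,5) by (auto simp: isolated_vertex_def)
    moreover have "finite {x. isolated_vertex V E x}"
      using simple_graph_finite_vertices[OF assms(1)] by (auto simp: isolated_vertex_def)
    ultimately have "card {u, v} \<le> 1"
      using assms(2) card_mono[of "{x. isolated_vertex V E x}" "{u, v}"] by linarith
    then show False using \<open>u \<noteq> v\<close> by simp
  next
    case False
    have "e = {u, v}" if "e \<in> E" "u \<in> e" for e
    proof -
      have "v \<in> e" using that assms(6) by blast
      obtain a b where "e = {a, b}" using simple_graph_edgeE[OF assms(1) \<open>e \<in> E\<close>] by metis
      with \<open>u \<in> e\<close> \<open>v \<in> e\<close> \<open>u \<noteq> v\<close> show ?thesis by auto
    qed
    then have "{e \<in> E. u \<in> e} \<subseteq> {{u, v}}" by blast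
    with False have "{e \<in> E. u \<in> e} = {{u, v}}" by blast
    then have "{u, v} \<in> E" "degree E u = 1" "degree E v = 1"
      using assms(6) by (auto simp: degree_def)
    then show False using assms(3) \<open>u \<noteq> v\<close> by (auto simp: has_isolated_edge_def)
  qed
qed

lemma irregular_weighting_exists:
  assumes "simple_graph V E"
    and "card {v. isolated_vertex V E v} \<le> 1"
    and "\<not> has_isolated_edge E"
  shows "\<exists>s w. 1 \<le> s \<and> irregular_weighting V E s w"
proof -
  obtain f n where f: "f ` E = {i::nat. i < n}" "inj_on f E"
    using finite_imp_inj_to_nat_seg[OF simple_graph_finite_edges[OF assms(1)]] by blast
  define w where "w e = (2::nat) ^ f e" for e
  define N where "N v = {e \<in> E. v \<in> e}" for v
  have "w e \<in> {1..2 ^ n}" if "e \<in> E" for e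
  proof -
    have "f e \<le> n" using f(1) that by (metis imageI less_imp_le mem_Collect_eq)
    then show ?thesis by (simp add: w_def power_increasing)
  qed
  moreover have "inj_on (weighted_degree E w) V"
  proof (rule inj_onI)
    fix u v assume "u \<in> V" "v \<in> V" and same: "weighted_degree E w u = weighted_degree E w v"
    have N_sub: "N x \<subseteq> E" and "finite (N x)" for x
      using simple_graph_finite_edges[OF assms(1)] by (auto simp: N_def)
    have "weighted_degree E w x = set_encode (f ` N x)" for x
    proof -
      have "inj_on f (N x)" using inj_on_subset[OF f(2) N_sub] .
      then show ?thesis
        unfolding set_encode_def w_def weighted_degree_def N_def by (simp add: sum.reindex comp_def)
    qed
    with same have "set_encode (f ` N u) = set_encode (f ` N v)" by simp
    then have "f ` N u = f ` N v" by (simp add: set_encode_eq \<open>\<And>x. finite (N x)\<close>)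
    then have "N u = N v" by (simp add: inj_on_image_eq_iff[OF f(2) N_sub N_sub])
    then show "u = v"
      using common_incidences_eq[OF assms \<open>u \<in> V\<close> \<open>v \<in> V\<close>] by (simp add: N_def)
  qed
  ultimately have "irregular_weighting V E (2 ^ n) w" by (simp add: irregular_weighting_iff)
  then show ?thesis by (intro exI[of _ "2 ^ n"] exI[of _ w]) simp
qed

lemma irreg_strength_weighting:
  assumes "simple_graph V E"
    and "card {v. isolated_vertex V E v} \<le> 1"
    and "\<not> has_isolated_edge E"
  shows "1 \<le> irreg_strength V E \<and> (\<exists>w. irregular_weighting V E (irreg_strength V E) w)"
proof -
  have "\<exists>s. 1 \<le> s \<and> (\<exists>w. irregular_weighting V E s w)"
    using irregular_weighting_exists[OF assms] by blast
  then show ?thesis unfolding irreg_strength_def by (rule LeastI_ex)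
qed

lemma irregular_weighting_regular_ge_2:
  assumes "simple_graph V E" "regular V E" "E \<noteq> {}" "irregular_weighting V E s w"
  shows "2 \<le> s"
proof (rule ccontr)
  assume "\<not> 2 \<le> s"
  then have "\<forall>e\<in>E. w e = 1" using assms(4) by (auto simp: irregular_weighting_def)
  then have "weighted_degree E w v = degree E v" for v
    by (simp add: weighted_degree_def degree_def)
  moreover obtain d where "\<forall>v\<in>V. degree E v = d" using assms(2) by (auto simp: regular_def)
  moreover obtain e where "e \<in> E" using assms(3) by blast
  then obtain a b where "a \<in> V" "b \<in> V" "a \<noteq> b" using assms(1) by (auto elim: simple_graph_edgeE)
  ultimately show False
    using assms(4) by (auto simp: irregular_weighting_iff inj_on_def)
qed

lemma max_mult_le_irregular_weighting:
  assumes "simple_graph V E" "1 \<le> s" "irregular_weighting V E s w"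
  shows "\<exists>F\<subseteq>E. max_mult V F \<le> 2 * s"
proof (rule max_mult_le_if_inj_weighted_degree[OF assms(1)])
  show "\<forall>e\<in>E. w e \<le> s" and "inj_on (weighted_degree E w) V"
    using assms(3) by (auto simp: irregular_weighting_iff)
qed (use assms(2) in simp)

lemma max_mult_le_irregular_weighting_regular:
  assumes "simple_graph V E" "regular V E" "E \<noteq> {}" "irregular_weighting V E s w"
  shows "\<exists>F\<subseteq>E. max_mult V F \<le> 2 * (s - 1)"
proof -
  have "2 \<le> s" using irregular_weighting_regular_ge_2[OF assms] .
  have weights: "\<forall>e\<in>E. 1 \<le> w e \<and> w e \<le> s" and inj: "inj_on (weighted_degree E w) V"
    using assms(4) by (auto simp: irregular_weighting_iff)
  obtain d where "\<forall>v\<in>V. degree E v = d" using assms(2) by (auto simp: regular_def)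
  then have inj': "inj_on (weighted_degree E (\<lambda>e. w e - 1)) V"
    using inj_on_weighted_degree_diff_one[OF simple_graph_finite_edges[OF assms(1)] _ _ inj]
      weights by blast
  have "\<forall>e\<in>E. w e - 1 \<le> s - 1" using weights by (simp add: diff_le_mono)
  moreover have "0 < s - 1" using \<open>2 \<le> s\<close> by simp
  ultimately show ?thesis using max_mult_le_if_inj_weighted_degree[OF assms(1) _ _ inj'] by blast
qed

theorem theorem1p8:
  fixes V :: "'a set" and E :: "'a set set"
  assumes "simple_graph V E"
    and "card {v. isolated_vertex V E v} \<le> 1"
    and "\<not> has_isolated_edge E"
  shows "(\<exists>F\<subseteq>E. max_mult V F \<le> 2 * irreg_strength V E)
    \<and> (regular V E \<and> E \<noteq> {} \<longrightarrow>
         (\<exists>F\<subseteq>E. int (max_mult V F) \<le> 2 * int (irreg_strength V E) - 2))"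
proof -
  define s where "s = irreg_strength V E"
  obtain w where "1 \<le> s" and w: "irregular_weighting V E s w"
    using irreg_strength_weighting[OF assms] unfolding s_def by blast
  have "\<exists>F\<subseteq>E. max_mult V F \<le> 2 * s"
    using max_mult_le_irregular_weighting[OF assms(1) \<open>1 \<le> s\<close> w] .
  moreover have "\<exists>F\<subseteq>E. int (max_mult V F) \<le> 2 * int s - 2" if regular: "regular V E" "E \<noteq> {}"
  proof -
    obtain F where "F \<subseteq> E" "max_mult V F \<le> 2 * (s - 1)"
      using max_mult_le_irregular_weighting_regular[OF assms(1) regular w] by blast
    then show ?thesis using \<open>1 \<le> s\<close> by (intro exI[of _ F]) linarith
  qed
  ultimately show ?thesis unfolding s_def by blast
qed

end
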